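(* For every integer $n\geq 1$, $$A_{2n}(p,q)=(1+p)A_{2n-1}(p,q)+(p+q)\sum_{i=1}^{n-1}\binom{2n-1}{2i-1}A_{2i-1}(p,q)A_{2n-2i}(p,q),$$ $$A_{2n+1}(p,q)=A_{2n}(p,q)+p\sum_{i=0}^{n-1}\binom{2n}{2i}A_{2i}(p,q)A_{2n-2i}(q,p)+q\sum_{i=1}^{n}\binom{2n}{2i-1}A_{2i-1}(p,q)A_{2n-2i+1}(p,q).$$
   Context: For a permutation $\pi=a_1a_2\cdots a_n$ of $[n]=\{1,\dots,n\}$, an index $i\in[n-1]$ is a descent if $a_i>a_{i+1}$. Let $\mathrm{odes}(\pi)$ (resp. $\mathrm{edes}(\pi)$) be the number of descents $i$ of $\pi$ with $i$ odd (resp. even). For $n\ge1$ the refined Eulerian polynomial is $A_n(p,q)=\sum_{\pi\in\mathfrak S_n}p^{\mathrm{odes}(\pi)}q^{\mathrm{edes}(\pi)}$, and $A_0(p,q)=1$. *)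

theory Defs
  imports "HOL-Combinatorics.Multiset_Permutations"
begin

(* A permutation a_1 ... a_n of [n] is the list [a_1,...,a_n]; index i (1-based) is a descent
   iff a_i > a_{i+1}, i.e. xs!(i-1) > xs!i for 1 <= i < n. *)
definition descents :: "nat list \<Rightarrow> nat set" where
  "descents xs = {i \<in> {1..<length xs}. xs ! (i - 1) > xs ! i}"

definition odes :: "nat list \<Rightarrow> nat" where
  "odes xs = card {i \<in> descents xs. odd i}"

definition edes :: "nat list \<Rightarrow> nat" where
  "edes xs = card {i \<in> descents xs. even i}"

(* Refined Eulerian polynomial, evaluated in an arbitrary commutative ring; A 0 = 1 automatically
   since permutations_of_set {} = {[]}. *)
definition A :: "nat \<Rightarrow> 'a::comm_ring_1 \<Rightarrow> 'a \<Rightarrow> 'a" where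
  "A n p q = (\<Sum>xs\<in>permutations_of_set {1..n}. p ^ odes xs * q ^ edes xs)"

end

theory Submission
  imports Defs
begin

text \<open>
  Give a permutation the weight $\prod_i w_i$ over its descents $i$, with $w_i = p$ for odd and
  $w_i = q$ for even $i$, and let $A_S(p,q)$ be the total weight of the permutations of a finite
  set $S$. Cutting a permutation of $S$ at its maximum $m$, as $\sigma\,m\,\tau$, its descents are
  those of $\sigma$, the position of $m$ (unless $\tau$ is empty), and those of $\tau$ shifted by
  $|\sigma| + 1$; the shift exchanges $p$ and $q$ when $|\sigma|$ is even. By induction on $|S|$
  this shows that $A_S$ depends only on $|S|$, and gives $A_{n+1}$ as a binomial convolution of
  smaller $A_j$. Splitting that convolution by the parity of $|\sigma|$ gives both identities,
  once $A_m(p,q) = A_m(q,p)$ is known for odd $m$: reverse-complementation is an involution on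
  permutations of $[m]$ that moves descent $i$ to $m - i$, which has the other parity.
\<close>

lemma descents_subset: "descents xs \<subseteq> {1..<length xs}"
  by (auto simp: descents_def)

lemma finite_descents [simp]: "finite (descents xs)"
  using descents_subset by (rule finite_subset) simp

lemma descents_append:
  "descents (xs @ ys) = descents xs \<union> (\<lambda>i. i + length xs) ` descents ys
     \<union> (if xs \<noteq> [] \<and> ys \<noteq> [] \<and> last xs > hd ys then {length xs} else {})"
proof (rule set_eqI)
  fix i
  show "i \<in> descents (xs @ ys) \<longleftrightarrow> i \<in> descents xs \<union> (\<lambda>i. i + length xs) ` descents ys
     \<union> (if xs \<noteq> [] \<and> ys \<noteq> [] \<and> last xs > hd ys then {length xs} else {})"
  proof (cases i "length xs" rule: linorder_cases)
    case less
    then show ?thesis using descents_subset[of ys] by (force simp: descents_def nth_append)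
  next
    case equal
    have "i \<notin> descents xs" "i \<notin> (\<lambda>i. i + length xs) ` descents ys"
      using equal descents_subset[of xs] descents_subset[of ys] by force+
    moreover have "i \<in> descents (xs @ ys) \<longleftrightarrow> xs \<noteq> [] \<and> ys \<noteq> [] \<and> last xs > hd ys"
    proof (cases "xs = []")
      case False
      then have "1 \<le> length xs" by (simp add: Suc_leI)
      then show ?thesis
        using equal False by (auto simp: descents_def nth_append last_conv_nth hd_conv_nth)
    qed (use equal in \<open>simp add: descents_def\<close>)
    ultimately show ?thesis using equal by auto
  next
    case greater
    define j where "j = i - length xs"
    have j: "i = j + length xs" "j \<ge> 1" using greater by (simp_all add: j_def)
    have "i \<notin> descents xs" using greater descents_subset[of xs] by force
    moreover have "i \<in> descents (xs @ ys) \<longleftrightarrow> j \<in> descents ys"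
      using j by (auto simp: descents_def nth_append)
    ultimately show ?thesis using j by auto
  qed
qed

definition des_weight :: "'a::comm_ring_1 \<Rightarrow> 'a \<Rightarrow> nat list \<Rightarrow> 'a" where
  "des_weight p q xs = (\<Prod>i\<in>descents xs. if odd i then p else q)"

lemma power_odes_edes: "p ^ odes xs * q ^ edes xs = des_weight p q xs"
proof -
  have "des_weight p q xs
      = (\<Prod>i\<in>descents xs \<inter> {i. odd i}. p) * (\<Prod>i\<in>descents xs \<inter> - {i. odd i}. q)"
    unfolding des_weight_def by (rule prod.If_cases) simp
  also have "descents xs \<inter> {i. odd i} = {i \<in> descents xs. odd i}" by auto
  also have "descents xs \<inter> - {i. odd i} = {i \<in> descents xs. even i}" by auto
  finally show ?thesis by (simp add: odes_def edes_def)
qed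

lemma des_weight_append:
  "des_weight p q (xs @ ys) = des_weight p q xs
     * (if xs \<noteq> [] \<and> ys \<noteq> [] \<and> last xs > hd ys then if odd (length xs) then p else q else 1)
     * (if even (length xs) then des_weight p q ys else des_weight q p ys)"
proof -
  let ?L = "length xs" and ?shift = "\<lambda>i. i + length xs"
  let ?J = "if xs \<noteq> [] \<and> ys \<noteq> [] \<and> last xs > hd ys then {?L} else {}"
  have "descents xs \<inter> ?shift ` descents ys = {}" "?L \<notin> descents xs \<union> ?shift ` descents ys"
    using descents_subset[of xs] descents_subset[of ys] by fastforce+
  then have disjoint: "descents xs \<inter> ?shift ` descents ys = {}"
      "(descents xs \<union> ?shift ` descents ys) \<inter> ?J = {}"
    by auto
  have "(\<Prod>i\<in>?shift ` descents ys. if odd i then p else q)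
      = (\<Prod>i\<in>descents ys. if odd (i + ?L) then p else q)"
    by (simp add: prod.reindex)
  also have "\<dots> = (if even ?L then des_weight p q ys else des_weight q p ys)"
    by (auto simp: des_weight_def intro: prod.cong)
  finally show ?thesis
    unfolding des_weight_def[of _ _ "xs @ ys"] descents_append
    by (simp add: prod.union_disjoint disjoint des_weight_def)
qed

lemma sum_permutations_of_set_split:
  assumes "finite S" "m \<in> S"
  shows "(\<Sum>zs\<in>permutations_of_set S. g zs) = (\<Sum>T\<in>Pow (S - {m}).
           \<Sum>(xs, ys)\<in>permutations_of_set T \<times> permutations_of_set (S - {m} - T). g (xs @ m # ys))"
proof -
  let ?X = "S - {m}" and ?P = "\<lambda>x. x \<noteq> m"
  let ?split = "\<lambda>zs. (set (takeWhile ?P zs), takeWhile ?P zs, tl (dropWhile ?P zs))"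
  have "(\<Sum>T\<in>Pow ?X. \<Sum>(xs, ys)\<in>permutations_of_set T \<times> permutations_of_set (?X - T).
           g (xs @ m # ys))
      = (\<Sum>(T, xs, ys)\<in>Sigma (Pow ?X) (\<lambda>T. permutations_of_set T \<times> permutations_of_set (?X - T)).
           g (xs @ m # ys))"
    by (rule sum.Sigma) (auto intro: finite_subset simp: assms(1) finite_permutations_of_set)
  also have "\<dots> = (\<Sum>zs\<in>permutations_of_set S. g zs)"
  proof (rule sum.reindex_bij_witness[where i = ?split and j = "\<lambda>(T, xs, ys). xs @ m # ys"])
    fix zs assume "zs \<in> permutations_of_set S"
    then have zs: "set zs = S" "distinct zs" by (auto simp: permutations_of_set_def)
    then have m: "m \<in> set zs" using assms(2) by simp
    have "dropWhile ?P zs \<noteq> []" using m by (simp add: dropWhile_eq_Nil_conv)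
    moreover have "hd (dropWhile ?P zs) = m" using hd_dropWhile[OF calculation] by simp
    ultimately have "dropWhile ?P zs = m # tl (dropWhile ?P zs)" by (metis list.collapse)
    then have split: "takeWhile ?P zs @ m # tl (dropWhile ?P zs) = zs"
      by (metis takeWhile_dropWhile_id)
    then show "(\<lambda>(T, xs, ys). xs @ m # ys) (?split zs) = zs" by simp
    show "?split zs \<in> Sigma (Pow ?X) (\<lambda>T. permutations_of_set T \<times> permutations_of_set (?X - T))"
      using zs by (subst (asm) (1 2) split[symmetric]) (auto simp: permutations_of_set_def)
  next
    fix a assume "a \<in> Sigma (Pow ?X) (\<lambda>T. permutations_of_set T \<times> permutations_of_set (?X - T))"
    then obtain T xs ys where a: "a = (T, xs, ys)" "T \<subseteq> ?X" "set xs = T" "distinct xs"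
        "set ys = ?X - T" "distinct ys"
      by (cases a) (auto simp: permutations_of_set_def)
    then have "m \<notin> set xs" by auto
    then show "?split ((\<lambda>(T, xs, ys). xs @ m # ys) a) = a"
      using a by (simp add: takeWhile_append dropWhile_append)
    show "(\<lambda>(T, xs, ys). xs @ m # ys) a \<in> permutations_of_set S"
      using a assms(2) by (auto simp: permutations_of_set_def)
  qed auto
  finally show ?thesis ..
qed

lemma sum_Pow_by_card:
  assumes "finite X"
  shows "(\<Sum>T\<in>Pow X. f (card T)) = (\<Sum>j\<le>card X. of_nat (card X choose j) * f j)"
proof -
  have "(\<Sum>T\<in>Pow X. f (card T)) = (\<Sum>j\<le>card X. \<Sum>T\<in>{T \<in> Pow X. card T = j}. f (card T))"
    by (rule sum.group[symmetric]) (use assms in \<open>auto intro: card_mono\<close>)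
  also have "\<dots> = (\<Sum>j\<le>card X. of_nat (card X choose j) * f j)"
  proof (rule sum.cong[OF refl])
    fix j
    have "{T \<in> Pow X. card T = j} = {T. T \<subseteq> X \<and> card T = j}" by auto
    then have "card {T \<in> Pow X. card T = j} = card X choose j" by (simp add: n_subsets[OF assms])
    then show "(\<Sum>T\<in>{T \<in> Pow X. card T = j}. f (card T)) = of_nat (card X choose j) * f j"
      by simp
  qed
  finally show ?thesis .
qed

definition A_set :: "nat set \<Rightarrow> 'a::comm_ring_1 \<Rightarrow> 'a \<Rightarrow> 'a" where
  "A_set S p q = (\<Sum>xs\<in>permutations_of_set S. des_weight p q xs)"

lemma A_eq_A_set: "A n p q = A_set {1..n} p q"
  by (simp add: A_def A_set_def power_odes_edes)

lemma A_0 [simp]: "A 0 p q = 1"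
  by (simp add: A_def odes_def edes_def descents_def)

lemma des_weight_append_Max:
  assumes "\<forall>x\<in>set xs. x < m" "\<forall>y\<in>set ys. y < m"
  shows "des_weight p q (xs @ m # ys) = des_weight p q xs
     * (if ys = [] then 1 else if even (length xs) then p else q)
     * (if odd (length xs) then des_weight p q ys else des_weight q p ys)"
proof -
  have "des_weight p q [m] = 1" "des_weight q p [m] = 1"
    by (simp_all add: des_weight_def descents_def)
  moreover have "xs \<noteq> [] \<Longrightarrow> last xs < m" using assms(1) by simp
  ultimately have "des_weight p q (xs @ [m]) = des_weight p q xs"
    using des_weight_append[of p q xs "[m]"] by auto
  then show ?thesis
    using assms(2) des_weight_append[of p q "xs @ [m]" ys] by (simp add: hd_in_set)
qed

lemma A_set_split_Max:
  assumes "finite S" "S \<noteq> {}"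
  defines "X \<equiv> S - {Max S}"
  shows "A_set S p q = (\<Sum>T\<in>Pow X. A_set T p q
     * (if T = X then 1 else if even (card T) then p else q)
     * (if odd (card T) then A_set (X - T) p q else A_set (X - T) q p))" (is "_ = ?rhs")
proof -
  have Max: "Max S \<in> S" "\<forall>x\<in>X. x < Max S"
    using assms by (auto simp: X_def le_neq_implies_less)
  have "A_set S p q = (\<Sum>T\<in>Pow X. \<Sum>(xs, ys)\<in>permutations_of_set T \<times> permutations_of_set (X - T).
           des_weight p q (xs @ Max S # ys))"
    unfolding A_set_def X_def by (rule sum_permutations_of_set_split[OF assms(1) Max(1)])
  also have "\<dots> = (\<Sum>T\<in>Pow X. \<Sum>(xs, ys)\<in>permutations_of_set T \<times> permutations_of_set (X - T).
           des_weight p q xs * (if T = X then 1 else if even (card T) then p else q)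
           * (if odd (card T) then des_weight p q ys else des_weight q p ys))"
  proof (intro sum.cong refl, clarify)
    fix T xs ys
    assume "T \<subseteq> X" "xs \<in> permutations_of_set T" "ys \<in> permutations_of_set (X - T)"
    then have "length xs = card T" "ys = [] \<longleftrightarrow> T = X"
        "\<forall>x\<in>set xs. x < Max S" "\<forall>y\<in>set ys. y < Max S"
      using Max(2) by (auto simp: permutations_of_set_def distinct_card)
    then show "des_weight p q (xs @ Max S # ys) = des_weight p q xs
        * (if T = X then 1 else if even (card T) then p else q)
        * (if odd (card T) then des_weight p q ys else des_weight q p ys)"
      by (simp add: des_weight_append_Max)
  qed
  also have "\<dots> = ?rhs"
  proof (intro sum.cong refl)
    fix T
    let ?c = "if T = X then 1 else if even (card T) then p else q"
    let ?w = "if odd (card T) then des_weight p q else des_weight q p"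
    have "(\<Sum>(xs, ys)\<in>permutations_of_set T \<times> permutations_of_set (X - T).
            des_weight p q xs * ?c * (if odd (card T) then des_weight p q ys else des_weight q p ys))
        = (\<Sum>xs\<in>permutations_of_set T. des_weight p q xs * ?c)
          * (\<Sum>ys\<in>permutations_of_set (X - T). ?w ys)"
      by (simp add: sum_product sum.cartesian_product)
    then show "(\<Sum>(xs, ys)\<in>permutations_of_set T \<times> permutations_of_set (X - T).
            des_weight p q xs * ?c * (if odd (card T) then des_weight p q ys else des_weight q p ys))
        = A_set T p q * ?c * (if odd (card T) then A_set (X - T) p q else A_set (X - T) q p)"
      by (simp add: A_set_def sum_distrib_right)
  qed
  finally show ?thesis .
qed

lemma A_set_eq_convolution:
  fixes p q :: "'a::comm_ring_1"
  assumes "finite S" "card S = Suc n"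
    and smaller: "\<And>T (p::'a) q. finite T \<Longrightarrow> card T \<le> n \<Longrightarrow> A_set T p q = A (card T) p q"
  shows "A_set S p q = (\<Sum>j\<le>n. of_nat (n choose j) * A j p q
     * (if j = n then 1 else if even j then p else q)
     * (if odd j then A (n - j) p q else A (n - j) q p))" (is "_ = ?rhs")
proof -
  define X where "X = S - {Max S}"
  have "S \<noteq> {}" using assms(2) by auto
  then have X: "finite X" "card X = n"
    using assms(1,2) by (simp_all add: X_def)
  have "A_set S p q = (\<Sum>T\<in>Pow X. A_set T p q
     * (if T = X then 1 else if even (card T) then p else q)
     * (if odd (card T) then A_set (X - T) p q else A_set (X - T) q p))"
    unfolding X_def by (rule A_set_split_Max[OF assms(1) \<open>S \<noteq> {}\<close>])
  also have "\<dots> = (\<Sum>T\<in>Pow X. A (card T) p q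
     * (if card T = n then 1 else if even (card T) then p else q)
     * (if odd (card T) then A (n - card T) p q else A (n - card T) q p))"
  proof (intro sum.cong refl)
    fix T assume "T \<in> Pow X"
    then have "T \<subseteq> X" by simp
    then have "finite T" "card T \<le> n" "card (X - T) = n - card T" "T = X \<longleftrightarrow> card T = n"
      using X card_subset_eq[OF X(1)] card_Diff_subset[OF finite_subset]
      by (auto intro: finite_subset card_mono)
    then show "A_set T p q * (if T = X then 1 else if even (card T) then p else q)
        * (if odd (card T) then A_set (X - T) p q else A_set (X - T) q p)
      = A (card T) p q * (if card T = n then 1 else if even (card T) then p else q)
        * (if odd (card T) then A (n - card T) p q else A (n - card T) q p)"
      using X by (simp add: smaller)
  qed
  also have "\<dots> = ?rhs"
    using sum_Pow_by_card[OF X(1)] by (simp add: X(2) mult.assoc)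
  finally show ?thesis .
qed

lemma A_set_eq_A: "finite S \<Longrightarrow> A_set S p q = A (card S) p q"
proof (induction "card S" arbitrary: S p q rule: less_induct)
  case less
  show ?case
  proof (cases "card S")
    case 0
    then have "S = {}" using less.prems by simp
    then show ?thesis by (simp add: A_eq_A_set)
  next
    case (Suc n)
    have smaller: "\<And>T (p::'a) q. finite T \<Longrightarrow> card T \<le> n \<Longrightarrow> A_set T p q = A (card T) p q"
      using less.hyps Suc by (simp add: less_Suc_eq_le)
    show ?thesis
      using A_set_eq_convolution[OF less.prems Suc smaller]
        A_set_eq_convolution[of "{1..Suc n}" n, OF _ _ smaller]
      by (simp add: Suc A_eq_A_set)
  qed
qed

lemma A_Suc:
  "A (Suc n) p q = (\<Sum>j\<le>n. of_nat (n choose j) * A j p q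
     * (if j = n then 1 else if even j then p else q)
     * (if odd j then A (n - j) p q else A (n - j) q p))"
  unfolding A_eq_A_set[of "Suc n"] by (rule A_set_eq_convolution) (simp_all add: A_set_eq_A)

lemma descents_rev_map:
  assumes antimono: "\<And>a b. a \<in> set xs \<Longrightarrow> b \<in> set xs \<Longrightarrow> f a < f b \<longleftrightarrow> b < a"
  shows "descents (rev (map f xs)) = (\<lambda>i. length xs - i) ` descents xs"
proof (rule set_eqI)
  fix i
  let ?L = "length xs"
  have "i \<in> (\<lambda>i. ?L - i) ` descents xs \<longleftrightarrow> 1 \<le> i \<and> i < ?L \<and> ?L - i \<in> descents xs"
    using descents_subset[of xs] by (force intro: rev_image_eqI)
  moreover have
    "rev (map f xs) ! (i - 1) > rev (map f xs) ! i \<longleftrightarrow> xs ! (?L - i - 1) > xs ! (?L - i)"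
    if "1 \<le> i" "i < ?L"
    using that by (auto simp: rev_nth Suc_diff_Suc antimono)
  ultimately show "i \<in> descents (rev (map f xs)) \<longleftrightarrow> i \<in> (\<lambda>i. ?L - i) ` descents xs"
    by (auto simp: descents_def)
qed

lemma des_weight_rev_map:
  assumes "\<And>a b. a \<in> set xs \<Longrightarrow> b \<in> set xs \<Longrightarrow> f a < f b \<longleftrightarrow> b < a"
    and "odd (length xs)"
  shows "des_weight p q (rev (map f xs)) = des_weight q p xs"
proof -
  let ?L = "length xs"
  have "inj_on (\<lambda>i. ?L - i) (descents xs)"
    using descents_subset[of xs] by (force intro: inj_onI)
  then have "des_weight p q (rev (map f xs))
      = (\<Prod>i\<in>descents xs. if odd (?L - i) then p else q)"
    by (simp add: des_weight_def descents_rev_map[OF assms(1)] prod.reindex)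
  also have "\<dots> = des_weight q p xs"
    unfolding des_weight_def
  proof (rule prod.cong[OF refl])
    fix i assume "i \<in> descents xs"
    then have "i < ?L" using descents_subset[of xs] by auto
    then show "(if odd (?L - i) then p else q) = (if odd i then q else p)"
      using assms(2) by auto
  qed
  finally show ?thesis .
qed

lemma A_swap_odd:
  assumes "odd n"
  shows "A n p q = A n q p"
proof -
  let ?c = "\<lambda>x. Suc n - x"
  let ?rc = "\<lambda>xs. rev (map ?c xs)"
  let ?P = "permutations_of_set {1..n}"
  have "bij_betw ?c {1..n} {1..n}"
    by (rule bij_betw_byWitness[where f' = ?c]) auto
  then have rc_perm: "?rc xs \<in> ?P" if "xs \<in> ?P" for xs
    using that by (auto simp: permutations_of_set_def bij_betw_def distinct_map)
  have rc_rc: "?rc (?rc xs) = xs" if "xs \<in> ?P" for xs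
    using that by (auto simp: permutations_of_set_def rev_map intro: map_idI)
  have "A_set {1..n} p q = A_set {1..n} q p"
    unfolding A_set_def
  proof (rule sum.reindex_bij_witness[where i = ?rc and j = ?rc])
    fix xs assume xs: "xs \<in> ?P"
    then have "length xs = n" by (simp add: length_finite_permutations_of_set)
    then show "des_weight q p (?rc xs) = des_weight p q xs"
      using xs assms by (intro des_weight_rev_map) (auto simp: permutations_of_set_def)
  qed (fact rc_perm rc_rc)+
  then show ?thesis by (simp add: A_eq_A_set)
qed

lemma A_even_rec:
  "A (2*k + 2) p q = (1 + p) * A (2*k + 1) p q
     + (p + q) * (\<Sum>i<k. of_nat ((2*k + 1) choose (2*i + 1)) * A (2*i + 1) p q * A (2*k - 2*i) p q)"
proof -
  let ?E = "\<lambda>i. of_nat ((2*k + 1) choose (2*i)) * A (2*i) p q * A (2*k + 1 - 2*i) p q"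
  let ?O = "\<lambda>i. of_nat ((2*k + 1) choose (2*i + 1)) * A (2*i + 1) p q * A (2*k - 2*i) p q"
  have odd_diff: "odd (Suc (2*k) - 2*i)" if "i \<le> k" for i
    using that by presburger
  have "A (2*k + 2) p q = (\<Sum>i\<le>k. p * ?E i + (if i = k then A (2*k + 1) p q else q * ?O i))"
  proof -
    have "A (2*k + 2) p q = A (Suc (Suc (2*k))) p q" by simp
    also have "\<dots> = (\<Sum>i\<le>k. p * ?E i + (if i = k then A (2*k + 1) p q else q * ?O i))"
      unfolding A_Suc[of "Suc (2*k)"] sum.in_pairs_0
      using odd_diff
      by (intro sum.cong refl) (auto simp: A_swap_odd[of _ q p] binomial_eq_0 mult_ac)
    finally show ?thesis .
  qed
  also have "\<dots> = p * sum ?E {..k} + (A (2*k + 1) p q + q * sum ?O {..<k})"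
  proof -
    have "(\<Sum>i<k. if i = k then A (2*k + 1) p q else q * ?O i) = q * sum ?O {..<k}"
      by (simp add: sum_distrib_left)
    then show ?thesis
      by (simp add: sum.distrib sum_distrib_left distrib_left flip: lessThan_Suc_atMost)
  qed
  also have "sum ?E {..k} = A (2*k + 1) p q + sum ?O {..<k}"
  proof -
    have "sum ?E {..k} = ?E 0 + (\<Sum>i<k. ?E (Suc i))"
      unfolding lessThan_Suc_atMost[symmetric] by (rule sum.lessThan_Suc_shift)
    also have "(\<Sum>i<k. ?E (Suc i)) = (\<Sum>i<k. ?E (Suc (k - Suc i)))"
      by (rule sum.nat_diff_reindex[symmetric])
    also have "(\<Sum>i<k. ?E (Suc (k - Suc i))) = sum ?O {..<k}"
    proof (rule sum.cong[OF refl])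
      fix i assume "i \<in> {..<k}"
      then have index: "2 * Suc (k - Suc i) = 2*k - 2*i" "2*k + 1 - (2*k - 2*i) = 2*i + 1"
        by auto
      then have "(2*k + 1) choose (2*k - 2*i) = (2*k + 1) choose (2*i + 1)"
        using binomial_symmetric[of "2*k - 2*i" "2*k + 1"] by simp
      then show "?E (Suc (k - Suc i)) = ?O i"
        unfolding index by (simp add: mult_ac)
    qed
    finally show ?thesis by simp
  qed
  finally show ?thesis by (simp add: algebra_simps)
qed

lemma A_odd_rec:
  "A (2*k + 3) p q = A (2*k + 2) p q
     + p * (\<Sum>i\<le>k. of_nat ((2*k + 2) choose (2*i)) * A (2*i) p q * A (2*k + 2 - 2*i) q p)
     + q * (\<Sum>i\<le>k. of_nat ((2*k + 2) choose (2*i + 1)) * A (2*i + 1) p q * A (2*k + 1 - 2*i) p q)"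
proof -
  have "A (2*k + 3) p q = A (Suc (Suc (Suc (2*k)))) p q" by (simp add: numeral_3_eq_3)
  also have "\<dots> = (\<Sum>i\<le>k.
         p * (of_nat ((2*k + 2) choose (2*i)) * A (2*i) p q * A (2*k + 2 - 2*i) q p)
       + q * (of_nat ((2*k + 2) choose (2*i + 1)) * A (2*i + 1) p q * A (2*k + 1 - 2*i) p q))
     + A (2*k + 2) p q"
    unfolding A_Suc[of "Suc (Suc (2*k))"] sum.atMost_Suc[of _ "Suc (2*k)"] sum.in_pairs_0
    by (intro arg_cong2[where f = "(+)"] sum.cong refl) (auto simp: mult_ac)
  finally show ?thesis by (simp add: sum.distrib sum_distrib_left algebra_simps)
qed

theorem lemma2p1:
  fixes p q :: "'a::comm_ring_1" and n :: nat
  assumes "n \<ge> 1"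
  shows "A (2*n) p q = (1 + p) * A (2*n - 1) p q
           + (p + q) * (\<Sum>i=1..n-1. of_nat ((2*n - 1) choose (2*i - 1))
                                    * A (2*i - 1) p q * A (2*n - 2*i) p q)
       \<and> A (2*n + 1) p q = A (2*n) p q
           + p * (\<Sum>i=0..n-1. of_nat ((2*n) choose (2*i)) * A (2*i) p q * A (2*n - 2*i) q p)
           + q * (\<Sum>i=1..n. of_nat ((2*n) choose (2*i - 1))
                              * A (2*i - 1) p q * A (2*n - 2*i + 1) p q)"
proof -
  obtain k where n: "n = Suc k" using assms by (cases n) auto
  have index: "2 * Suc i - 1 = 2*i + 1" "2 * Suc k - 2 * Suc i = 2*k - 2*i" for i
    by simp_all
  note shift = sum.atLeast1_atMost_eq[folded One_nat_def]
  have sum1: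
    "(\<Sum>i=1..n-1. of_nat ((2*n - 1) choose (2*i - 1)) * A (2*i - 1) p q * A (2*n - 2*i) p q)
      = (\<Sum>i<k. of_nat ((2*k + 1) choose (2*i + 1)) * A (2*i + 1) p q * A (2*k - 2*i) p q)"
    unfolding n diff_Suc_1 shift by (intro sum.cong refl) (simp add: index)
  have sum2:
    "(\<Sum>i=0..n-1. of_nat ((2*n) choose (2*i)) * A (2*i) p q * A (2*n - 2*i) q p)
      = (\<Sum>i\<le>k. of_nat ((2*k + 2) choose (2*i)) * A (2*i) p q * A (2*k + 2 - 2*i) q p)"
    unfolding n atLeast0AtMost by (intro sum.cong refl) simp_all
  have sum3:
    "(\<Sum>i=1..n. of_nat ((2*n) choose (2*i - 1)) * A (2*i - 1) p q * A (2*n - 2*i + 1) p q)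
      = (\<Sum>i\<le>k. of_nat ((2*k + 2) choose (2*i + 1)) * A (2*i + 1) p q * A (2*k + 1 - 2*i) p q)"
    unfolding n shift lessThan_Suc_atMost by (intro sum.cong refl) (simp add: index Suc_diff_le)
  have double: "2*n = 2*k + 2" "2*k + 2 - 1 = 2*k + 1" "2*k + 2 + 1 = 2*k + 3"
    using n by simp_all
  show ?thesis
    unfolding sum1 sum2 sum3 unfolding double by (rule conjI[OF A_even_rec A_odd_rec])
qed

end
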